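(* Let $\tau$ be an untwisted skew product with group factor $\mathbb Z^d$ and base shift $(\Sigma,\sigma)$ a transitive countable state Markov shift. The following are equivalent: (a) $\tau$ has the ftp; (b) $\langle D(\tau)\rangle=\mathbb Z^d$; (c) for every finite-index subgroup $\Gamma\subset\mathbb Z^d$, $\langle D(\tau_\Gamma)\rangle_+=\langle D(\tau_\Gamma)\rangle=\mathbb Z^d/\Gamma$.
   Context: Countable state Markov shift $(\Sigma,\sigma)$: countable state set $S$, $\{0,1\}$-matrix $C$ with finite row/column sums, $\Sigma=\{s\in S^{\mathbb Z}:C_{s_is_{i+1}}=1\ \forall i\}$, product of discrete topologies, $\sigma$ left shift; transitive means for all nonempty open $U,V$ some $n$ has $\sigma^n(U)\cap V\neq\emptyset$. Untwisted skew product with group $G$: $\tau(s,g)=(\sigma(s),g+h(s))$ on $\Sigma\times G$, $h:\Sigma\to G$ depending only on $(s_0,s_1)$; for a subgroup $\Gamma$, $\tau_\Gamma(s,g+\Gamma)=(\sigma s,g+h(s)+\Gamma)$ (an untwisted skew product with group $G/\Gamma$). ftp: $\tau_\Gamma$ is transitive for every finite-index subgroup $\Gamma\subset\mathbb Z^d$. With $h(s,n)=\sum_{i=0}^{n-1}h(\sigma^is)$, the displacement set is $D(\tau)=\{h(p,n):n>0,\ \sigma^n(p)=p\}$. For $X$ in an abelian group, $\langle X\rangle$ is the subgroup generated by $X$ and $\langle X\rangle_+$ is the additive semigroup generated by $X$ (all finite sums, with at least one term, of elements of $X$). *)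

theory Defs
  imports "HOL-Analysis.Analysis" "HOL-Algebra.Algebra"
begin

text \<open>States of type 's, state set S, transition relation C (the 0-1 matrix: C a b means C_ab = 1).\<close>

definition finite_rows_cols :: "'s set \<Rightarrow> ('s \<Rightarrow> 's \<Rightarrow> bool) \<Rightarrow> bool" where
  "finite_rows_cols S C \<longleftrightarrow>
     (\<forall>a\<in>S. finite {b\<in>S. C a b} \<and> finite {b\<in>S. C b a})"

definition shift_space :: "'s set \<Rightarrow> ('s \<Rightarrow> 's \<Rightarrow> bool) \<Rightarrow> (int \<Rightarrow> 's) set" where
  "shift_space S C = {x. (\<forall>i. x i \<in> S) \<and> (\<forall>i. C (x i) (x (i + 1)))}"

definition shift :: "(int \<Rightarrow> 's) \<Rightarrow> (int \<Rightarrow> 's)" where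
  "shift x = (\<lambda>i. x (i + 1))"

text \<open>Open subsets of Sigma for the (subspace of the) product of discrete topologies.\<close>
definition sigma_open :: "'s set \<Rightarrow> ('s \<Rightarrow> 's \<Rightarrow> bool) \<Rightarrow> (int \<Rightarrow> 's) set \<Rightarrow> bool" where
  "sigma_open S C U \<longleftrightarrow> U \<subseteq> shift_space S C \<and>
     (\<forall>x\<in>U. \<exists>N::nat. \<forall>y\<in>shift_space S C. (\<forall>i. \<bar>i\<bar> \<le> int N \<longrightarrow> y i = x i) \<longrightarrow> y \<in> U)"

definition shift_transitive :: "'s set \<Rightarrow> ('s \<Rightarrow> 's \<Rightarrow> bool) \<Rightarrow> bool" where
  "shift_transitive S C \<longleftrightarrow>
     (\<forall>U V. sigma_open S C U \<and> U \<noteq> {} \<and> sigma_open S C V \<and> V \<noteq> {} \<longrightarrow>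
        (\<exists>n::nat. (shift ^^ n) ` U \<inter> V \<noteq> {}))"

text \<open>The cocycle h(s) = hh (s_0) (s_1) depends only on (s_0, s_1).\<close>
definition skew :: "('g, 'b) monoid_scheme \<Rightarrow> ('s \<Rightarrow> 's \<Rightarrow> 'g) \<Rightarrow> (int \<Rightarrow> 's) \<times> 'g \<Rightarrow> (int \<Rightarrow> 's) \<times> 'g" where
  "skew G hh = (\<lambda>(x, g). (shift x, g \<otimes>\<^bsub>G\<^esub> hh (x 0) (x 1)))"

text \<open>Open subsets of Sigma x G, G discrete.\<close>
definition skew_open :: "'s set \<Rightarrow> ('s \<Rightarrow> 's \<Rightarrow> bool) \<Rightarrow> ('g, 'b) monoid_scheme \<Rightarrow> ((int \<Rightarrow> 's) \<times> 'g) set \<Rightarrow> bool" where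
  "skew_open S C G W \<longleftrightarrow> W \<subseteq> shift_space S C \<times> carrier G \<and>
     (\<forall>g\<in>carrier G. sigma_open S C {x. (x, g) \<in> W})"

definition skew_transitive :: "'s set \<Rightarrow> ('s \<Rightarrow> 's \<Rightarrow> bool) \<Rightarrow> ('g, 'b) monoid_scheme \<Rightarrow> ('s \<Rightarrow> 's \<Rightarrow> 'g) \<Rightarrow> bool" where
  "skew_transitive S C G hh \<longleftrightarrow>
     (\<forall>U V. skew_open S C G U \<and> U \<noteq> {} \<and> skew_open S C G V \<and> V \<noteq> {} \<longrightarrow>
        (\<exists>n::nat. (skew G hh ^^ n) ` U \<inter> V \<noteq> {}))"

fun hsum :: "('g, 'b) monoid_scheme \<Rightarrow> ('s \<Rightarrow> 's \<Rightarrow> 'g) \<Rightarrow> (int \<Rightarrow> 's) \<Rightarrow> nat \<Rightarrow> 'g" where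
  "hsum G hh x 0 = \<one>\<^bsub>G\<^esub>"
| "hsum G hh x (Suc n) = hsum G hh x n \<otimes>\<^bsub>G\<^esub> hh (x (int n)) (x (int n + 1))"

definition displacement :: "'s set \<Rightarrow> ('s \<Rightarrow> 's \<Rightarrow> bool) \<Rightarrow> ('g, 'b) monoid_scheme \<Rightarrow> ('s \<Rightarrow> 's \<Rightarrow> 'g) \<Rightarrow> 'g set" where
  "displacement S C G hh =
     {hsum G hh p n | p n. p \<in> shift_space S C \<and> n > 0 \<and> (shift ^^ n) p = p}"

text \<open>Additive semigroup generated by A (finite sums with at least one term).\<close>
definition semigen :: "('g, 'b) monoid_scheme \<Rightarrow> 'g set \<Rightarrow> 'g set" where
  "semigen M A = {x. \<forall>T. A \<subseteq> T \<and> (\<forall>a\<in>T. \<forall>b\<in>T. a \<otimes>\<^bsub>M\<^esub> b \<in> T) \<longrightarrow> x \<in> T}"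

definition Zd :: "(int ^ 'd) monoid" where
  "Zd = \<lparr>carrier = UNIV, monoid.mult = (+), one = 0\<rparr>"

definition finite_index :: "(int ^ 'd) set \<Rightarrow> bool" where
  "finite_index \<Gamma> \<longleftrightarrow> subgroup \<Gamma> Zd \<and> finite (rcosets\<^bsub>Zd\<^esub> \<Gamma>)"

text \<open>Cocycle of tau_Gamma: h composed with the projection Z^d -> Z^d/Gamma.\<close>
definition quot_cocycle :: "(int ^ 'd) set \<Rightarrow> ('s \<Rightarrow> 's \<Rightarrow> int ^ 'd) \<Rightarrow> 's \<Rightarrow> 's \<Rightarrow> (int ^ 'd) set" where
  "quot_cocycle \<Gamma> hh = (\<lambda>a b. \<Gamma> #>\<^bsub>Zd\<^esub> hh a b)"

definition ftp :: "'s set \<Rightarrow> ('s \<Rightarrow> 's \<Rightarrow> bool) \<Rightarrow> ('s \<Rightarrow> 's \<Rightarrow> int ^ 'd) \<Rightarrow> bool" where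
  "ftp S C hh \<longleftrightarrow> (\<forall>\<Gamma>. finite_index \<Gamma> \<longrightarrow>
      skew_transitive S C (Zd Mod \<Gamma>) (quot_cocycle \<Gamma> hh))"

end

theory Submission
  imports Defs
begin

text \<open>
  The algebra of \<open>\<int>\<^sup>d\<close> enters through two facts.  First, a nonempty subsemigroup of \<open>\<int>\<^sup>d\<close>
  that is stable under translation by a finite-index subgroup \<open>\<Gamma>\<close> is a subgroup (some positive
  multiple of each element lies in \<open>\<Gamma>\<close>).  Second, every subgroup \<open>H\<close> of \<open>\<int>\<^sup>d\<close> is closed in the
  congruence topology: a vector congruent to an element of \<open>H\<close> modulo every \<open>m > 0\<close> lies in \<open>H\<close>
  (induction on the coordinates, pivoting on a generator of each coordinate ideal).  Hence a
  proper subgroup lies in the proper finite-index subgroup \<open>H + m\<int>\<^sup>d\<close> for some \<open>m\<close>.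

  On the dynamical side, weighted walks in the transition graph are concatenated by gluing
  orbits; closed walks of positive length realise exactly the displacements.  For (b) \<Rightarrow> (a),
  closed walks through a vertex realise every class of \<open>\<int>\<^sup>d/\<Gamma>\<close>, so two cylinders can be joined
  by an orbit with any prescribed \<open>\<Gamma>\<close>-displacement.  For (a) \<Rightarrow> (b), if the displacements lie in
  a proper finite-index \<open>\<Gamma>\<close>, the cocycle is a coboundary modulo \<open>\<Gamma>\<close>, so the skew product modulo
  \<open>\<Gamma>\<close> preserves the graph of the transfer function and cannot be transitive.  (b) \<Leftrightarrow> (c) uses
  the two algebraic facts directly.
\<close>

section \<open>The group \<open>\<int>\<^sup>d\<close>, its subgroups and cosets\<close>

lemma Zd_simps [simp]: "carrier Zd = UNIV" "monoid.mult Zd = (+)" "one Zd = 0"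
  by (simp_all add: Zd_def)

lemma Zd_comm_group: "comm_group Zd"
  by (rule comm_groupI) (auto simp: Zd_def intro: exI[of _ "- _"])

lemma Zd_group: "group Zd"
  using Zd_comm_group comm_group.axioms(2) by blast

lemma Zd_inv [simp]: "inv\<^bsub>Zd\<^esub> x = - x"
  by (rule group.inv_equality[OF Zd_group]) auto

lemma subgroup_Zd_zero: "subgroup \<Gamma> Zd \<Longrightarrow> 0 \<in> \<Gamma>"
  using subgroup.one_closed by fastforce

lemma subgroup_Zd_add: "subgroup \<Gamma> Zd \<Longrightarrow> a \<in> \<Gamma> \<Longrightarrow> b \<in> \<Gamma> \<Longrightarrow> a + b \<in> \<Gamma>"
  using subgroup.m_closed by fastforce

lemma subgroup_Zd_neg: "subgroup \<Gamma> Zd \<Longrightarrow> a \<in> \<Gamma> \<Longrightarrow> - a \<in> \<Gamma>"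
  using subgroup.m_inv_closed by fastforce

lemma subgroup_Zd_diff: "subgroup \<Gamma> Zd \<Longrightarrow> a \<in> \<Gamma> \<Longrightarrow> b \<in> \<Gamma> \<Longrightarrow> a - b \<in> \<Gamma>"
  by (metis subgroup_Zd_add subgroup_Zd_neg diff_conv_add_uminus)

lemma subgroup_ZdI:
  "0 \<in> H \<Longrightarrow> (\<And>a b. a \<in> H \<Longrightarrow> b \<in> H \<Longrightarrow> a + b \<in> H) \<Longrightarrow> (\<And>a. a \<in> H \<Longrightarrow> - a \<in> H)
   \<Longrightarrow> subgroup H Zd"
  by (rule subgroup.intro) auto

lemma subgroup_Zd_smult:
  assumes sg: "subgroup \<Gamma> Zd" and x: "x \<in> \<Gamma>"
  shows "(c::int) *s x \<in> \<Gamma>"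
proof -
  have nat_mult: "int n *s x \<in> \<Gamma>" for n
  proof (induction n)
    case 0
    then show ?case using subgroup_Zd_zero[OF sg] by simp
  next
    case (Suc n)
    have "int (Suc n) *s x = int n *s x + x" by (simp add: vector_sadd_rdistrib)
    then show ?case using Suc subgroup_Zd_add[OF sg] x by metis
  qed
  show ?thesis
  proof (cases "0 \<le> c")
    case True
    then show ?thesis using nat_mult[of "nat c"] by simp
  next
    case False
    then have "- (int (nat (- c)) *s x) \<in> \<Gamma>" using subgroup_Zd_neg[OF sg nat_mult] by blast
    then show ?thesis using False by (simp add: vector_smult_lneg)
  qed
qed

lemma coset_Zd: "\<Gamma> #>\<^bsub>Zd\<^esub> a = (\<lambda>g. g + a) ` \<Gamma>"
  by (auto simp: r_coset_def)

lemma coset_eq_iff: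
  assumes sg: "subgroup \<Gamma> Zd"
  shows "\<Gamma> #>\<^bsub>Zd\<^esub> a = \<Gamma> #>\<^bsub>Zd\<^esub> b \<longleftrightarrow> a - b \<in> \<Gamma>"
proof
  assume e: "\<Gamma> #>\<^bsub>Zd\<^esub> a = \<Gamma> #>\<^bsub>Zd\<^esub> b"
  have "a \<in> \<Gamma> #>\<^bsub>Zd\<^esub> a" using subgroup_Zd_zero[OF sg] by (force simp: coset_Zd)
  then obtain g where "g \<in> \<Gamma>" "a = g + b" using e by (auto simp: coset_Zd)
  then show "a - b \<in> \<Gamma>" by simp
next
  assume d: "a - b \<in> \<Gamma>"
  show "\<Gamma> #>\<^bsub>Zd\<^esub> a = \<Gamma> #>\<^bsub>Zd\<^esub> b"
  proof (auto simp: coset_Zd)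
    fix g assume "g \<in> \<Gamma>"
    then have "g + (a - b) \<in> \<Gamma>" using subgroup_Zd_add[OF sg] d by blast
    then show "g + a \<in> (\<lambda>g. g + b) ` \<Gamma>" by (force intro: image_eqI[of _ _ "g + (a - b)"])
  next
    fix g assume "g \<in> \<Gamma>"
    then have "g - (a - b) \<in> \<Gamma>" using subgroup_Zd_diff[OF sg] d by blast
    then show "g + b \<in> (\<lambda>g. g + a) ` \<Gamma>" by (force intro: image_eqI[of _ _ "g - (a - b)"])
  qed
qed

lemma coset_zero: "\<Gamma> #>\<^bsub>Zd\<^esub> 0 = \<Gamma>"
  using coset_Zd[of \<Gamma> 0] by simp

lemma coset_eq_subgroup_iff: "subgroup \<Gamma> Zd \<Longrightarrow> \<Gamma> #>\<^bsub>Zd\<^esub> a = \<Gamma> \<longleftrightarrow> a \<in> \<Gamma>"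
  using coset_eq_iff[of \<Gamma> a 0] coset_zero[of \<Gamma>] by simp

lemma quotient_group: "subgroup \<Gamma> Zd \<Longrightarrow> group (Zd Mod \<Gamma>)"
  by (rule normal.factorgroup_is_group[OF comm_group.subgroup_imp_normal[OF Zd_comm_group]])

lemma quotient_carrier: "carrier (Zd Mod \<Gamma>) = range (\<lambda>a. \<Gamma> #>\<^bsub>Zd\<^esub> a)"
  by (simp add: carrier_FactGroup)

lemma coset_mult [simp]:
  "subgroup \<Gamma> Zd \<Longrightarrow> (\<Gamma> #>\<^bsub>Zd\<^esub> a) <#>\<^bsub>Zd\<^esub> (\<Gamma> #>\<^bsub>Zd\<^esub> b) = \<Gamma> #>\<^bsub>Zd\<^esub> (a + b)"
  using normal.rcos_sum[OF comm_group.subgroup_imp_normal[OF Zd_comm_group], of \<Gamma> a b] by simp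

lemma finite_index_multiple:
  assumes fi: "finite_index \<Gamma>"
  shows "\<exists>k::nat. 0 < k \<and> int k *s q \<in> \<Gamma>"
proof -
  have sg: "subgroup \<Gamma> Zd" and fin: "finite (rcosets\<^bsub>Zd\<^esub> \<Gamma>)"
    using fi by (auto simp: finite_index_def)
  define f where "f = (\<lambda>j::nat. \<Gamma> #>\<^bsub>Zd\<^esub> (int j *s q))"
  have "range f \<subseteq> rcosets\<^bsub>Zd\<^esub> \<Gamma>" by (auto simp: f_def RCOSETS_def)
  then have "\<not> inj f" using fin finite_subset finite_imageD infinite_UNIV_nat by blast
  then obtain i j where ij: "f i = f j" "i < j" by (metis linorder_inj_onI' UNIV_I)
  have "int j *s q - int i *s q \<in> \<Gamma>" using coset_eq_iff[OF sg] ij(1)[symmetric] by (simp add: f_def)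
  then have "int (j - i) *s q \<in> \<Gamma>" using ij(2) by (simp add: of_nat_diff vector_sub_rdistrib)
  then show ?thesis using ij(2) by (intro exI[of _ "j - i"]) simp
qed

text \<open>A nonempty subsemigroup \<open>M\<close> of \<open>\<int>\<^sup>d\<close> with \<open>M + \<Gamma> \<subseteq> M\<close> for a finite-index \<open>\<Gamma>\<close> is a
  subgroup: if \<open>k a \<in> \<Gamma>\<close> with \<open>k > 0\<close>, then \<open>0 = k a - k a\<close> and \<open>-a = (2k-1) a - k a - k a\<close>
  are obtained from positive multiples of \<open>a\<close> by subtracting elements of \<open>\<Gamma>\<close>.\<close>
lemma saturated_subsemigroup_is_subgroup:
  assumes fi: "finite_index \<Gamma>" and ne: "M \<noteq> {}"
    and add: "\<And>a b. a \<in> M \<Longrightarrow> b \<in> M \<Longrightarrow> a + b \<in> M"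
    and sat: "\<And>a g. a \<in> M \<Longrightarrow> g \<in> \<Gamma> \<Longrightarrow> a + g \<in> M"
  shows "subgroup M Zd"
proof -
  have sg: "subgroup \<Gamma> Zd" using fi by (simp add: finite_index_def)
  have mult: "int j *s a \<in> M" if a: "a \<in> M" and j: "0 < j" for a j
    using j
  proof (induction j rule: nat_induct_non_zero)
    case 1
    then show ?case using a by simp
  next
    case (Suc j)
    have "int (Suc j) *s a = int j *s a + a" by (simp add: vector_sadd_rdistrib)
    then show ?case using Suc.IH add a by metis
  qed
  have zero_neg: "0 \<in> M \<and> - a \<in> M" if a: "a \<in> M" for a
  proof -
    obtain k where k: "0 < k" "int k *s a \<in> \<Gamma>" using finite_index_multiple[OF fi] by blast
    have kneg: "- (int k *s a) \<in> \<Gamma>" using subgroup_Zd_neg[OF sg k(2)] .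
    have "int k *s a + - (int k *s a) \<in> M" using sat[OF mult[OF a k(1)] kneg] .
    moreover have "int (2 * k - 1) *s a \<in> M" by (rule mult[OF a]) (use k(1) in simp)
    then have "int (2 * k - 1) *s a + - (int k *s a) + - (int k *s a) \<in> M"
      using sat kneg by blast
    moreover have "int (2 * k - 1) *s a + - (int k *s a) + - (int k *s a) = - a"
      using k(1) by (simp add: vec_eq_iff of_nat_diff algebra_simps)
    ultimately show ?thesis by simp
  qed
  show ?thesis
    using ne zero_neg add by (intro subgroup_ZdI) blast+
qed

section \<open>Subgroups of \<open>\<int>\<^sup>d\<close> are closed in the congruence topology\<close>

definition plus_multiples :: "(int ^ 'd) set \<Rightarrow> int \<Rightarrow> (int ^ 'd) set" where
  "plus_multiples H m = {x. \<exists>h\<in>H. \<forall>i. m dvd (x$i - h$i)}"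

definition congruence_closure :: "(int ^ 'd) set \<Rightarrow> (int ^ 'd) set" where
  "congruence_closure H = {v. \<forall>m>0. v \<in> plus_multiples H m}"

lemma congruence_closure_coordinate_zero:
  assumes "\<forall>x\<in>H. x$k = 0" and "v \<in> congruence_closure H"
  shows "v$k = 0"
proof (rule ccontr)
  assume nz: "v$k \<noteq> 0"
  have "(0::int) < \<bar>v$k\<bar> + 1" by simp
  then obtain h where "h \<in> H" "\<forall>i. (\<bar>v$k\<bar> + 1) dvd (v$i - h$i)"
    using assms(2) unfolding congruence_closure_def plus_multiples_def by blast
  then have "(\<bar>v$k\<bar> + 1) dvd v$k" using assms(1) by (metis diff_zero)
  then have "\<bar>\<bar>v$k\<bar> + 1\<bar> \<le> \<bar>v$k\<bar>" using dvd_imp_le_int[OF nz] by blast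
  then show False by simp
qed

text \<open>The \<open>k\<close>-th coordinates of a subgroup form an ideal of \<open>\<int>\<close>; if it is nonzero it is generated
  by the \<open>k\<close>-th coordinate of some element (the least positive one).\<close>
lemma subgroup_coordinate_generator:
  assumes sg: "subgroup H Zd" and x0: "x0 \<in> H" "x0$k \<noteq> 0"
  shows "\<exists>h0\<in>H. 0 < h0$k \<and> (\<forall>x\<in>H. h0$k dvd x$k)"
proof -
  define P where "P = (\<lambda>n::nat. 0 < n \<and> (\<exists>x\<in>H. x$k = int n))"
  have pos: "0 < nat \<bar>x0$k\<bar>" using x0(2) by simp
  have "P (nat \<bar>x0$k\<bar>)"
  proof (cases "0 < x0$k")
    case True
    then have "x0$k = int (nat \<bar>x0$k\<bar>)" by simp
    then show ?thesis unfolding P_def by (intro conjI bexI[of _ x0] pos x0(1))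
  next
    case False
    then have "(- x0)$k = int (nat \<bar>x0$k\<bar>)" by simp
    then show ?thesis unfolding P_def by (intro conjI bexI[of _ "- x0"] pos subgroup_Zd_neg[OF sg x0(1)])
  qed
  define a where "a = (LEAST n. P n)"
  have Pa: "P a" unfolding a_def by (rule LeastI) fact
  have a_min: "a \<le> n" if "P n" for n unfolding a_def using that by (rule Least_le)
  obtain h0 where h0: "h0 \<in> H" "h0$k = int a" "0 < a" using Pa unfolding P_def by blast
  have "int a dvd x$k" if x: "x \<in> H" for x
  proof -
    define y where "y = x - (x$k div int a) *s h0"
    have yH: "y \<in> H" unfolding y_def using subgroup_Zd_diff[OF sg x subgroup_Zd_smult[OF sg h0(1)]] .
    have yk: "y$k = x$k mod int a" by (simp add: y_def h0(2) minus_div_mult_eq_mod)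
    have "y$k = 0"
    proof (rule ccontr)
      assume "y$k \<noteq> 0"
      then have "P (nat (y$k))" using yH yk h0(3) unfolding P_def by auto
      then have "int a \<le> y$k" using a_min yk h0(3) by fastforce
      moreover have "x$k mod int a < int a" using h0(3) by simp
      ultimately show False using yk by simp
    qed
    then show ?thesis using yk by (simp add: dvd_eq_mod_eq_0)
  qed
  then show ?thesis using h0 by (intro bexI[of _ h0] conjI ballI) auto
qed

lemma congruence_closure_eliminate_coordinate:
  assumes sg: "subgroup H Zd" and h0: "h0 \<in> H" "0 < h0$k" and dvd: "\<forall>x\<in>H. h0$k dvd x$k"
    and v: "v \<in> congruence_closure H"
  shows "\<exists>t. (v - t *s h0)$k = 0 \<and> v - t *s h0 \<in> congruence_closure {x\<in>H. x$k = 0}"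
proof -
  define a where "a = h0$k"
  have a_pos: "0 < a" and h0k: "h0$k = a" using h0(2) by (simp_all add: a_def)
  obtain hA where hA: "hA \<in> H" "\<forall>i. a dvd (v$i - hA$i)"
    using v a_pos unfolding congruence_closure_def plus_multiples_def by blast
  have "a dvd (v$k - hA$k) + hA$k" using hA dvd h0k by (intro dvd_add) auto
  then obtain t where t: "v$k = a * t" by (auto elim: dvdE)
  define v' where "v' = v - t *s h0"
  have v'k: "v'$k = 0" using t by (simp add: v'_def h0k mult.commute)
  have "v' \<in> plus_multiples {x\<in>H. x$k = 0} m" if m: "0 < m" for m
  proof -
    have "0 < m * a" using m a_pos by simp
    then obtain h where h: "h \<in> H" "\<forall>i. (m * a) dvd (v$i - h$i)"
      using v unfolding congruence_closure_def plus_multiples_def by blast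
    define h1 where "h1 = h - t *s h0"
    have h1H: "h1 \<in> H" unfolding h1_def using subgroup_Zd_diff[OF sg h(1) subgroup_Zd_smult[OF sg h0(1)]] .
    obtain s where s: "h1$k = a * s" using dvd h1H h0k by (auto elim: dvdE)
    have "(m * a) dvd (v'$k - h1$k)" using h(2) by (simp add: v'_def h1_def)
    then have "(m * a) dvd (a * s)" using v'k s by simp
    then have ms: "m dvd s" using a_pos by (simp add: mult.commute)
    define h2 where "h2 = h1 - s *s h0"
    have "h2 \<in> {x\<in>H. x$k = 0}"
      using subgroup_Zd_diff[OF sg h1H subgroup_Zd_smult[OF sg h0(1)]] s by (simp add: h2_def h0k)
    moreover have "m dvd (v'$i - h2$i)" for i
    proof -
      have "v'$i - h2$i = (v$i - h$i) + s * h0$i" by (simp add: v'_def h1_def h2_def)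
      moreover have "m dvd (v$i - h$i)" using h(2) by (meson dvd_mult_left)
      ultimately show ?thesis using ms by simp
    qed
    ultimately show ?thesis unfolding plus_multiples_def by blast
  qed
  then show ?thesis using v'k unfolding v'_def congruence_closure_def by blast
qed

lemma supported_subgroup_congruence_closed:
  fixes H :: "(int ^ 'd) set"
  assumes "finite K" and "subgroup H Zd" and "\<forall>x\<in>H. \<forall>i. i \<notin> K \<longrightarrow> x$i = 0"
    and "\<forall>i. i \<notin> K \<longrightarrow> v$i = 0" and "v \<in> congruence_closure H"
  shows "v \<in> H"
  using assms
proof (induction K arbitrary: H v rule: finite_induct)
  case empty
  then have "v = 0" by (simp add: vec_eq_iff)
  then show ?case using subgroup_Zd_zero[OF empty.prems(1)] by simp
next
  case (insert k K)
  note sg = insert.prems(1)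
  show ?case
  proof (cases "\<forall>x\<in>H. x$k = 0")
    case True
    then have "v$k = 0" using congruence_closure_coordinate_zero insert.prems(4) by blast
    show ?thesis
    proof (rule insert.IH)
      show "\<forall>x\<in>H. \<forall>i. i \<notin> K \<longrightarrow> x$i = 0" using insert.prems(2) True by (metis insert_iff)
      show "\<forall>i. i \<notin> K \<longrightarrow> v$i = 0" using insert.prems(3) \<open>v$k = 0\<close> by auto
    qed (use insert.prems in auto)
  next
    case False
    then obtain x0 where "x0 \<in> H" "x0$k \<noteq> 0" by blast
    then obtain h0 where h0: "h0 \<in> H" "0 < h0$k" "\<forall>x\<in>H. h0$k dvd x$k"
      using subgroup_coordinate_generator[OF sg] by blast
    then obtain t where t: "(v - t *s h0)$k = 0" "v - t *s h0 \<in> congruence_closure {x\<in>H. x$k = 0}"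
      using congruence_closure_eliminate_coordinate[OF sg] insert.prems(4) by blast
    have "v - t *s h0 \<in> {x\<in>H. x$k = 0}"
    proof (rule insert.IH)
      show "subgroup {x\<in>H. x$k = 0} Zd"
        by (rule subgroup_ZdI) (auto intro: subgroup_Zd_zero[OF sg] subgroup_Zd_add[OF sg] subgroup_Zd_neg[OF sg])
      show "\<forall>x\<in>{x\<in>H. x$k = 0}. \<forall>i. i \<notin> K \<longrightarrow> x$i = 0" using insert.prems(2) by auto
      show "\<forall>i. i \<notin> K \<longrightarrow> (v - t *s h0)$i = 0"
      proof (intro allI impI)
        fix i assume "i \<notin> K"
        then show "(v - t *s h0)$i = 0" using insert.prems(2,3) h0(1) t(1) by (cases "i = k") auto
      qed
    qed (rule t(2))
    then have "(v - t *s h0) + t *s h0 \<in> H"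
      using subgroup_Zd_add[OF sg _ subgroup_Zd_smult[OF sg h0(1)]] by blast
    then show ?thesis by simp
  qed
qed

lemma subgroup_congruence_closed: "subgroup H Zd \<Longrightarrow> congruence_closure H \<subseteq> H"
  using supported_subgroup_congruence_closed[of UNIV H] by auto

lemma finite_box: "finite {x :: int ^ 'd. \<forall>i. x$i \<in> {0..<m}}"
proof -
  have "{x :: int ^ 'd. \<forall>i. x$i \<in> {0..<m}} \<subseteq> vec_lambda ` (PiE UNIV (\<lambda>_. {0..<m}))"
  proof
    fix x :: "int ^ 'd" assume "x \<in> {x. \<forall>i. x$i \<in> {0..<m}}"
    then show "x \<in> vec_lambda ` (PiE UNIV (\<lambda>_. {0..<m}))"
      by (intro image_eqI[of _ _ "vec_nth x"]) auto
  qed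
  moreover have "finite (vec_lambda ` (PiE (UNIV :: 'd set) (\<lambda>_. {0..<m})))"
    by (intro finite_imageI finite_PiE) auto
  ultimately show ?thesis using finite_subset by blast
qed

text \<open>\<open>H + m\<int>\<^sup>d\<close> has finite index: its cosets are represented by the box \<open>[0, m)\<^sup>d\<close>.\<close>
lemma plus_multiples_finite_index:
  fixes H :: "(int ^ 'd) set"
  assumes sg: "subgroup H Zd" and m: "0 < m"
  shows "finite_index (plus_multiples H m)"
proof -
  let ?G = "plus_multiples H m"
  have sgG: "subgroup ?G Zd" unfolding plus_multiples_def
  proof (rule subgroup_ZdI)
    show "0 \<in> {x. \<exists>h\<in>H. \<forall>i. m dvd (x$i - h$i)}" using subgroup_Zd_zero[OF sg] by force
  next
    fix a b assume "a \<in> {x. \<exists>h\<in>H. \<forall>i. m dvd (x$i - h$i)}" "b \<in> {x. \<exists>h\<in>H. \<forall>i. m dvd (x$i - h$i)}"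
    then obtain ha hb where h: "ha \<in> H" "hb \<in> H" and "\<forall>i. m dvd (a$i - ha$i)" "\<forall>i. m dvd (b$i - hb$i)"
      by blast
    moreover have "(a + b)$i - (ha + hb)$i = (a$i - ha$i) + (b$i - hb$i)" for i by simp
    ultimately have "\<forall>i. m dvd ((a + b)$i - (ha + hb)$i)" by (metis dvd_add)
    then show "a + b \<in> {x. \<exists>h\<in>H. \<forall>i. m dvd (x$i - h$i)}" using subgroup_Zd_add[OF sg h] by blast
  next
    fix a assume "a \<in> {x. \<exists>h\<in>H. \<forall>i. m dvd (x$i - h$i)}"
    then obtain ha where h: "ha \<in> H" and "\<forall>i. m dvd (a$i - ha$i)" by blast
    moreover have "(- a)$i - (- ha)$i = - (a$i - ha$i)" for i by simp
    ultimately have "\<forall>i. m dvd ((- a)$i - (- ha)$i)" by (metis dvd_minus_iff)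
    then show "- a \<in> {x. \<exists>h\<in>H. \<forall>i. m dvd (x$i - h$i)}" using subgroup_Zd_neg[OF sg h] by blast
  qed
  have "rcosets\<^bsub>Zd\<^esub> ?G \<subseteq> (\<lambda>a. ?G #>\<^bsub>Zd\<^esub> a) ` {x :: int ^ 'd. \<forall>i. x$i \<in> {0..<m}}"
  proof
    fix Y assume "Y \<in> rcosets\<^bsub>Zd\<^esub> ?G"
    then obtain a where Y: "Y = ?G #>\<^bsub>Zd\<^esub> a" by (auto simp: RCOSETS_def)
    define r where "r = (\<chi> i. a$i mod m)"
    have "m dvd (a$i - a$i mod m)" for i by (simp add: minus_mod_eq_mult_div)
    then have "a - r \<in> ?G" unfolding plus_multiples_def r_def using subgroup_Zd_zero[OF sg]
      by (intro CollectI bexI[of _ 0]) auto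
    then have "Y = ?G #>\<^bsub>Zd\<^esub> r" using Y coset_eq_iff[OF sgG] by simp
    moreover have "r \<in> {x. \<forall>i. x$i \<in> {0..<m}}" unfolding r_def using m by auto
    ultimately show "Y \<in> (\<lambda>a. ?G #>\<^bsub>Zd\<^esub> a) ` {x :: int ^ 'd. \<forall>i. x$i \<in> {0..<m}}" by blast
  qed
  then have "finite (rcosets\<^bsub>Zd\<^esub> ?G)" using finite_box finite_subset by blast
  then show ?thesis using sgG unfolding finite_index_def by blast
qed

lemma proper_subgroup_in_proper_finite_index:
  assumes sg: "subgroup H Zd" and ne: "H \<noteq> UNIV"
  shows "\<exists>\<Gamma>. finite_index \<Gamma> \<and> H \<subseteq> \<Gamma> \<and> \<Gamma> \<noteq> UNIV"
proof -
  obtain v where "v \<notin> H" using ne by blast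
  then obtain m where "0 < m" "v \<notin> plus_multiples H m"
    using subgroup_congruence_closed[OF sg] unfolding congruence_closure_def by blast
  moreover have "H \<subseteq> plus_multiples H m" unfolding plus_multiples_def by force
  ultimately show ?thesis using plus_multiples_finite_index[OF sg] by blast
qed

lemma non_generating_in_proper_finite_index:
  assumes "generate Zd D \<noteq> UNIV"
  obtains \<Gamma> v where "finite_index \<Gamma>" "D \<subseteq> \<Gamma>" "v \<notin> \<Gamma>"
proof -
  have "subgroup (generate Zd D) Zd" by (rule group.generate_is_subgroup[OF Zd_group]) simp
  then obtain \<Gamma> where "finite_index \<Gamma>" "generate Zd D \<subseteq> \<Gamma>" "\<Gamma> \<noteq> UNIV"
    using proper_subgroup_in_proper_finite_index assms by blast
  moreover have "D \<subseteq> generate Zd D" by (auto intro: generate.incl)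
  ultimately show thesis using that by blast
qed

section \<open>Walks in the transition graph and their weights\<close>

lemma shift_pow: "(shift ^^ n) x = (\<lambda>i. x (i + int n))"
  by (induction n) (simp_all add: shift_def algebra_simps)

lemma shift_space_translate:
  assumes x: "x \<in> shift_space S C"
  shows "(\<lambda>j. x (j + i)) \<in> shift_space S C"
proof -
  have "C (x (j + i)) (x (j + 1 + i))" for j
    using x unfolding shift_space_def by (metis (mono_tags, lifting) add.commute add.left_commute mem_Collect_eq)
  then show ?thesis using x unfolding shift_space_def by simp
qed

definition glue :: "(int \<Rightarrow> 's) \<Rightarrow> nat \<Rightarrow> (int \<Rightarrow> 's) \<Rightarrow> (int \<Rightarrow> 's)" where
  "glue z1 k z2 = (\<lambda>i. if i \<le> int k then z1 i else z2 (i - int k))"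

lemma glue_left: "i \<le> int k \<Longrightarrow> glue z1 k z2 i = z1 i"
  by (simp add: glue_def)

lemma glue_right: "z1 (int k) = z2 0 \<Longrightarrow> 0 \<le> j \<Longrightarrow> glue z1 k z2 (int k + j) = z2 j"
  by (cases "j = 0") (auto simp: glue_def)

lemma glue_in_shift_space:
  assumes "z1 \<in> shift_space S C" "z2 \<in> shift_space S C" "z1 (int k) = z2 0"
  shows "glue z1 k z2 \<in> shift_space S C"
  unfolding shift_space_def
proof (intro CollectI conjI allI)
  fix i
  show "glue z1 k z2 i \<in> S" using assms by (auto simp: glue_def shift_space_def)
  show "C (glue z1 k z2 i) (glue z1 k z2 (i + 1))"
  proof (cases "i < int k")
    case True
    then show ?thesis using assms(1) by (simp add: glue_def shift_space_def)
  next
    case False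
    then have "glue z1 k z2 i = z2 (i - int k)" "glue z1 k z2 (i + 1) = z2 (i - int k + 1)"
      using assms(3) by (auto simp: glue_def algebra_simps)
    then show ?thesis using assms(2) by (simp add: shift_space_def)
  qed
qed

lemma hsum_glue:
  assumes m: "z1 (int k) = z2 0"
  shows "hsum Zd hh (glue z1 k z2) (k + n) = hsum Zd hh z1 k + hsum Zd hh z2 n"
proof (induction n)
  case 0
  have "hsum Zd hh (glue z1 k z2) j = hsum Zd hh z1 j" if "j \<le> k" for j
    using that by (induction j) (auto simp: glue_left)
  then show ?case by simp
next
  case (Suc n)
  have "glue z1 k z2 (int (k + n)) = z2 (int n)" using glue_right[of z1 k z2, OF m, of "int n"] by simp
  moreover have "glue z1 k z2 (int (k + n) + 1) = z2 (int n + 1)"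
    using glue_right[of z1 k z2, OF m, of "int n + 1"] by (simp add: add.assoc)
  ultimately show ?case using Suc by (simp add: add.assoc)
qed

definition occurs :: "'s set \<Rightarrow> ('s \<Rightarrow> 's \<Rightarrow> bool) \<Rightarrow> 's \<Rightarrow> bool" where
  "occurs S C c \<longleftrightarrow> (\<exists>x\<in>shift_space S C. \<exists>i. x i = c)"

definition walk :: "'s set \<Rightarrow> ('s \<Rightarrow> 's \<Rightarrow> bool) \<Rightarrow> ('s \<Rightarrow> 's \<Rightarrow> int ^ 'd) \<Rightarrow> 's \<Rightarrow> 's \<Rightarrow> nat
    \<Rightarrow> int ^ 'd \<Rightarrow> bool" where
  "walk S C hh a b L w \<longleftrightarrow> (\<exists>z\<in>shift_space S C. z 0 = a \<and> z (int L) = b \<and> hsum Zd hh z L = w)"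

lemma occurs_shift_space: "x \<in> shift_space S C \<Longrightarrow> occurs S C (x i)"
  unfolding occurs_def by blast

lemma walk_occurs: "walk S C hh a b L w \<Longrightarrow> occurs S C a \<and> occurs S C b"
  unfolding walk_def occurs_def by blast

lemma walk_refl:
  assumes "occurs S C c"
  shows "walk S C hh c c 0 0"
proof -
  obtain x i where x: "x \<in> shift_space S C" "x i = c" using assms unfolding occurs_def by blast
  then show ?thesis unfolding walk_def
    using shift_space_translate[OF x(1)] by (intro bexI[of _ "\<lambda>j. x (j + i)"]) auto
qed

lemma walk_step:
  assumes "x \<in> shift_space S C"
  shows "walk S C hh (x i) (x (i + 1)) 1 (hh (x i) (x (i + 1)))"
  unfolding walk_def using shift_space_translate[OF assms, of i]
  by (intro bexI[of _ "\<lambda>j. x (j + i)"]) (auto simp: add.commute)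

lemma walk_concat:
  assumes "walk S C hh a b L1 w1" "walk S C hh b c L2 w2"
  shows "walk S C hh a c (L1 + L2) (w1 + w2)"
proof -
  obtain z1 where z1: "z1 \<in> shift_space S C" "z1 0 = a" "z1 (int L1) = b" "hsum Zd hh z1 L1 = w1"
    using assms(1) unfolding walk_def by blast
  obtain z2 where z2: "z2 \<in> shift_space S C" "z2 0 = b" "z2 (int L2) = c" "hsum Zd hh z2 L2 = w2"
    using assms(2) unfolding walk_def by blast
  have m: "z1 (int L1) = z2 0" using z1 z2 by simp
  have "glue z1 L1 z2 \<in> shift_space S C" by (rule glue_in_shift_space[OF z1(1) z2(1) m])
  moreover have "glue z1 L1 z2 0 = a" using z1(2) by (simp add: glue_def)
  moreover have "glue z1 L1 z2 (int (L1 + L2)) = c" using glue_right[of z1 L1 z2, OF m, of "int L2"] z2(3) by simp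
  moreover have "hsum Zd hh (glue z1 L1 z2) (L1 + L2) = w1 + w2" using hsum_glue[of z1 L1 z2 hh L2, OF m] z1(4) z2(4) by simp
  ultimately show ?thesis unfolding walk_def by blast
qed

lemma transitive_walk:
  assumes tr: "shift_transitive S C" and a: "occurs S C a" and b: "occurs S C b"
  shows "\<exists>L w. walk S C hh a b L w"
proof -
  define U where "U = {z \<in> shift_space S C. z 0 = a}"
  define V where "V = {z \<in> shift_space S C. z 0 = b}"
  have oU: "sigma_open S C U" and oV: "sigma_open S C V"
    unfolding sigma_open_def U_def V_def by (auto intro!: exI[of _ 0])
  have "U \<noteq> {}" using walk_refl[OF a] unfolding walk_def U_def by blast
  moreover have "V \<noteq> {}" using walk_refl[OF b] unfolding walk_def V_def by blast
  ultimately obtain n where "(shift ^^ n) ` U \<inter> V \<noteq> {}"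
    using tr oU oV unfolding shift_transitive_def by blast
  then obtain z where "z \<in> U" "(shift ^^ n) z \<in> V" by blast
  then have "z \<in> shift_space S C" "z 0 = a" "z (int n) = b" by (auto simp: U_def V_def shift_pow)
  then show ?thesis unfolding walk_def by blast
qed

lemma closed_walk_displacement:
  assumes p: "walk S C hh a a L w" and L: "0 < L"
  shows "w \<in> displacement S C Zd hh"
proof -
  obtain z where z: "z \<in> shift_space S C" "z 0 = a" "z (int L) = a" "hsum Zd hh z L = w"
    using p unfolding walk_def by blast
  define q where "q = (\<lambda>k. z (k mod int L))"
  have Lp: "0 < int L" using L by simp
  have next_mod: "q (i + 1) = z (i mod int L + 1)" for i
  proof -
    have "(i + 1) mod int L = (i mod int L + 1) mod int L" by (simp add: mod_add_left_eq)
    moreover have "0 \<le> i mod int L" "i mod int L < int L" using Lp by auto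
    ultimately show ?thesis using z(2,3) unfolding q_def
      by (cases "i mod int L + 1 = int L") auto
  qed
  have qS: "q \<in> shift_space S C"
    using z(1) next_mod unfolding shift_space_def q_def by auto
  have per: "(shift ^^ L) q = q" by (simp add: shift_pow q_def)
  have "hsum Zd hh q n = hsum Zd hh z n" if "n \<le> L" for n
    using that
  proof (induction n)
    case (Suc n)
    have agree: "q (int k) = z (int k)" if "k \<le> L" for k
      using that z(2,3) unfolding q_def by (cases "k = L") auto
    have "q (int n) = z (int n)" "q (int n + 1) = z (int n + 1)"
      using agree[of n] agree[of "Suc n"] Suc.prems by (auto simp: add.commute)
    then show ?case using Suc by simp
  qed simp
  then have "hsum Zd hh q L = w" using z(4) by simp
  then show ?thesis unfolding displacement_def using qS per L by blast
qed

lemma displacement_closed_walk: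
  assumes "d \<in> displacement S C Zd hh"
  shows "\<exists>c n. 0 < n \<and> walk S C hh c c n d"
proof -
  obtain p n where p: "p \<in> shift_space S C" "0 < n" "(shift ^^ n) p = p" "d = hsum Zd hh p n"
    using assms unfolding displacement_def by blast
  have "p (int n) = p 0" using fun_cong[OF p(3), of 0] by (simp add: shift_pow)
  then show ?thesis unfolding walk_def using p by blast
qed

section \<open>Iterates of the skew products\<close>

lemma hsum_carrier:
  assumes "monoid G" "\<And>a b. hh a b \<in> carrier G"
  shows "hsum G hh x n \<in> carrier G"
  by (induction n) (auto simp: assms monoid.m_closed monoid.one_closed)

lemma skew_pow:
  assumes G: "monoid G" and hc: "\<And>a b. hh a b \<in> carrier G" and g: "g \<in> carrier G"
  shows "(skew G hh ^^ n) (x, g) = ((shift ^^ n) x, g \<otimes>\<^bsub>G\<^esub> hsum G hh x n)"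
proof (induction n)
  case 0
  then show ?case using G g by (simp add: monoid.r_one)
next
  case (Suc n)
  have "(skew G hh ^^ Suc n) (x, g) = skew G hh ((shift ^^ n) x, g \<otimes>\<^bsub>G\<^esub> hsum G hh x n)"
    using Suc by simp
  also have "\<dots> = ((shift ^^ Suc n) x, (g \<otimes>\<^bsub>G\<^esub> hsum G hh x n) \<otimes>\<^bsub>G\<^esub> hh (x (int n)) (x (int n + 1)))"
    by (simp add: skew_def shift_pow shift_def add.commute)
  finally show ?case by (simp add: monoid.m_assoc[OF G g hsum_carrier[OF G hc] hc])
qed

lemma hsum_quot:
  assumes "subgroup \<Gamma> Zd"
  shows "hsum (Zd Mod \<Gamma>) (quot_cocycle \<Gamma> hh) x n = \<Gamma> #>\<^bsub>Zd\<^esub> hsum Zd hh x n"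
  by (induction n) (simp_all add: coset_zero quot_cocycle_def assms)

lemma displacement_quot:
  assumes "subgroup \<Gamma> Zd"
  shows "displacement S C (Zd Mod \<Gamma>) (quot_cocycle \<Gamma> hh)
       = (\<lambda>v. \<Gamma> #>\<^bsub>Zd\<^esub> v) ` displacement S C Zd hh"
  unfolding displacement_def hsum_quot[OF assms] by blast

lemma skew_pow_quot:
  assumes sg: "subgroup \<Gamma> Zd"
  shows "(skew (Zd Mod \<Gamma>) (quot_cocycle \<Gamma> hh) ^^ n) (x, \<Gamma> #>\<^bsub>Zd\<^esub> a)
       = ((shift ^^ n) x, \<Gamma> #>\<^bsub>Zd\<^esub> (a + hsum Zd hh x n))"
proof -
  have "monoid (Zd Mod \<Gamma>)" using quotient_group[OF sg] by (rule group.is_monoid)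
  moreover have "quot_cocycle \<Gamma> hh c c' \<in> carrier (Zd Mod \<Gamma>)" for c c'
    by (simp add: quot_cocycle_def quotient_carrier)
  moreover have "\<Gamma> #>\<^bsub>Zd\<^esub> a \<in> carrier (Zd Mod \<Gamma>)" by (simp add: quotient_carrier)
  ultimately show ?thesis by (simp add: skew_pow hsum_quot sg)
qed

section \<open>(b) implies (a)\<close>

text \<open>Every displacement is the difference of the weights of two closed walks through a fixed
  state \<open>a\<close>: go from \<open>a\<close> to a periodic orbit, around it and back, or skip the orbit.\<close>
lemma displacement_loop_difference:
  assumes tr: "shift_transitive S C" and a: "occurs S C a" and d: "d \<in> displacement S C Zd hh"
  shows "\<exists>L1 L2 q1 q2. walk S C hh a a L1 q1 \<and> walk S C hh a a L2 q2 \<and> d = q1 - q2"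
proof -
  obtain c n where cn: "walk S C hh c c n d" using displacement_closed_walk[OF d] by blast
  have c: "occurs S C c" using walk_occurs[OF cn] by blast
  obtain L1 w1 where p1: "walk S C hh a c L1 w1" using transitive_walk[OF tr a c] by blast
  obtain L2 w2 where p2: "walk S C hh c a L2 w2" using transitive_walk[OF tr c a] by blast
  have "walk S C hh a a (L1 + n + L2) (w1 + d + w2)" using walk_concat[OF walk_concat[OF p1 cn] p2] .
  moreover have "walk S C hh a a (L1 + L2) (w1 + w2)" using walk_concat[OF p1 p2] .
  moreover have "d = (w1 + d + w2) - (w1 + w2)" by simp
  ultimately show ?thesis by blast
qed

text \<open>If the displacements generate \<open>\<int>\<^sup>d\<close>, walks between two given states realise every class
  modulo a finite-index \<open>\<Gamma>\<close>: the closed-walk weights at \<open>a\<close> plus \<open>\<Gamma>\<close> form a saturated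
  subsemigroup, hence a subgroup; it contains all displacements, hence it is all of \<open>\<int>\<^sup>d\<close>.\<close>
lemma walk_in_every_class:
  assumes tr: "shift_transitive S C" and gen: "generate Zd (displacement S C Zd hh) = UNIV"
    and fi: "finite_index \<Gamma>" and a: "occurs S C a" and b: "occurs S C b"
  shows "\<exists>L w. walk S C hh a b L w \<and> w - t \<in> \<Gamma>"
proof -
  have sg: "subgroup \<Gamma> Zd" using fi by (simp add: finite_index_def)
  define M where "M = {x. \<exists>q g L. x = q + g \<and> walk S C hh a a L q \<and> g \<in> \<Gamma>}"
  have memM: "q + g \<in> M" if "walk S C hh a a L q" "g \<in> \<Gamma>" for L q g
    unfolding M_def using that by (intro CollectI exI[of _ q] exI[of _ g] exI[of _ L]) simp
  have loopM: "q \<in> M" if "walk S C hh a a L q" for L q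
    using memM[OF that subgroup_Zd_zero[OF sg]] by simp
  have sgM: "subgroup M Zd"
  proof (rule saturated_subsemigroup_is_subgroup[OF fi])
    show "M \<noteq> {}" using loopM[OF walk_refl[OF a]] by blast
  next
    fix x y assume "x \<in> M" "y \<in> M"
    then obtain L1 q1 g1 L2 q2 g2 where xy: "x = q1 + g1" "y = q2 + g2" and g: "g1 \<in> \<Gamma>" "g2 \<in> \<Gamma>"
      and q: "walk S C hh a a L1 q1" "walk S C hh a a L2 q2" unfolding M_def by blast
    have "x + y = (q1 + q2) + (g1 + g2)" using xy by (simp add: algebra_simps)
    then show "x + y \<in> M" using memM[OF walk_concat[OF q] subgroup_Zd_add[OF sg g]] by simp
  next
    fix x g assume "x \<in> M" "g \<in> \<Gamma>"
    then obtain L1 q1 g1 where "x = q1 + g1" "walk S C hh a a L1 q1" "g1 + g \<in> \<Gamma>"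
      unfolding M_def using subgroup_Zd_add[OF sg] by blast
    then show "x + g \<in> M" using memM by (simp add: add.assoc)
  qed
  have "displacement S C Zd hh \<subseteq> M"
  proof
    fix d assume "d \<in> displacement S C Zd hh"
    then obtain L1 L2 q1 q2 where q: "walk S C hh a a L1 q1" "walk S C hh a a L2 q2" and "d = q1 - q2"
      using displacement_loop_difference[OF tr a] by blast
    then show "d \<in> M" using subgroup_Zd_diff[OF sgM loopM[OF q(1)] loopM[OF q(2)]] by simp
  qed
  then have "generate Zd (displacement S C Zd hh) \<subseteq> M"
    by (rule group.generate_subgroup_incl[OF Zd_group _ sgM])
  then have M: "u \<in> M" for u using gen by auto
  obtain L0 w0 where p0: "walk S C hh a b L0 w0" using transitive_walk[OF tr a b] by blast
  obtain q g Lq where qg: "t - w0 = q + g" "walk S C hh a a Lq q" "g \<in> \<Gamma>"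
    using M[of "t - w0"] unfolding M_def by blast
  have "walk S C hh a b (Lq + L0) (q + w0)" using walk_concat[OF qg(2) p0] .
  moreover have "(q + w0) - t = - g" using qg(1) by (simp add: algebra_simps)
  ultimately show ?thesis using subgroup_Zd_neg[OF sg qg(3)]
    by (intro exI[of _ "Lq + L0"] exI[of _ "q + w0"]) simp
qed

lemma splice_orbit:
  assumes x: "x \<in> shift_space S C" and y: "y \<in> shift_space S C"
    and p: "walk S C hh (x (int N)) (y (- int N')) L w"
  shows "\<exists>z\<in>shift_space S C. (\<forall>i\<le>int N. z i = x i)
           \<and> (\<forall>i\<ge>- int N'. (shift ^^ (N + (L + N'))) z i = y i)
           \<and> hsum Zd hh z (N + (L + N')) = hsum Zd hh x N + (w + hsum Zd hh (\<lambda>j. y (j - int N')) N')"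
proof -
  define y' where "y' = (\<lambda>j. y (j - int N'))"
  have y'S: "y' \<in> shift_space S C" using shift_space_translate[OF y, of "- int N'"] by (simp add: y'_def)
  obtain q where q: "q \<in> shift_space S C" "q 0 = x (int N)" "q (int L) = y' 0" "hsum Zd hh q L = w"
    using p unfolding walk_def y'_def by auto
  define z2 where "z2 = glue q L y'"
  define z where "z = glue x N z2"
  have m1: "q (int L) = y' 0" using q(3) .
  have m2: "x (int N) = z2 0" unfolding z2_def using q(2) by (simp add: glue_left)
  have z2S: "z2 \<in> shift_space S C" unfolding z2_def by (rule glue_in_shift_space[OF q(1) y'S m1])
  have zS: "z \<in> shift_space S C" unfolding z_def by (rule glue_in_shift_space[OF x z2S m2])
  have past: "\<forall>i\<le>int N. z i = x i" by (simp add: z_def glue_left)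
  have future: "\<forall>i\<ge>- int N'. (shift ^^ (N + (L + N'))) z i = y i"
  proof (intro allI impI)
    fix i assume i: "- int N' \<le> i"
    have "(shift ^^ (N + (L + N'))) z i = z (int N + (int L + (i + int N')))"
      by (simp add: shift_pow algebra_simps)
    also have "\<dots> = z2 (int L + (i + int N'))"
      unfolding z_def using glue_right[of x N z2, OF m2, of "int L + (i + int N')"] i by simp
    also have "\<dots> = y' (i + int N')"
      unfolding z2_def using glue_right[of q L y', OF m1, of "i + int N'"] i by simp
    finally show "(shift ^^ (N + (L + N'))) z i = y i" by (simp add: y'_def)
  qed
  have weight: "hsum Zd hh z (N + (L + N')) = hsum Zd hh x N + (w + hsum Zd hh y' N')"
    unfolding z_def using hsum_glue[of x N z2 hh "L + N'", OF m2] hsum_glue[of q L y' hh N', OF m1] q(4)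
    by (simp add: z2_def)
  show ?thesis by (intro bexI[of _ z] conjI past future weight[unfolded y'_def] zS)
qed

lemma skew_open_point:
  assumes "skew_open S C (Zd Mod \<Gamma>) W" and "W \<noteq> {}"
  shows "\<exists>x a. x \<in> shift_space S C \<and> (x, \<Gamma> #>\<^bsub>Zd\<^esub> a) \<in> W"
proof -
  obtain x g where xg: "(x, g) \<in> W" using assms(2) by auto
  then have "x \<in> shift_space S C" "g \<in> carrier (Zd Mod \<Gamma>)" using assms(1) unfolding skew_open_def by auto
  then show ?thesis using xg unfolding quotient_carrier by auto
qed

lemma skew_open_cylinder:
  assumes "skew_open S C G W" and "(x, g) \<in> W"
  shows "\<exists>N::nat. \<forall>z\<in>shift_space S C. (\<forall>i. \<bar>i\<bar> \<le> int N \<longrightarrow> z i = x i) \<longrightarrow> (z, g) \<in> W"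
proof -
  have "g \<in> carrier G" using assms unfolding skew_open_def by blast
  then have "sigma_open S C {x. (x, g) \<in> W}" using assms(1) unfolding skew_open_def by blast
  then show ?thesis using assms(2) unfolding sigma_open_def by blast
qed

text \<open>(b) \<Rightarrow> (a): join the two cylinders by a spliced orbit whose middle walk corrects the
  displacement modulo \<open>\<Gamma>\<close>.\<close>
lemma skew_transitive_of_generating:
  assumes tr: "shift_transitive S C" and gen: "generate Zd (displacement S C Zd hh) = UNIV"
    and fi: "finite_index \<Gamma>"
  shows "skew_transitive S C (Zd Mod \<Gamma>) (quot_cocycle \<Gamma> hh)"
  unfolding skew_transitive_def
proof (intro allI impI)
  fix U V
  assume UV: "skew_open S C (Zd Mod \<Gamma>) U \<and> U \<noteq> {} \<and> skew_open S C (Zd Mod \<Gamma>) V \<and> V \<noteq> {}"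
  have sg: "subgroup \<Gamma> Zd" using fi by (simp add: finite_index_def)
  obtain x a where x: "x \<in> shift_space S C" "(x, \<Gamma> #>\<^bsub>Zd\<^esub> a) \<in> U"
    using skew_open_point[of S C \<Gamma> U] UV by blast
  obtain y b where y: "y \<in> shift_space S C" "(y, \<Gamma> #>\<^bsub>Zd\<^esub> b) \<in> V"
    using skew_open_point[of S C \<Gamma> V] UV by blast
  obtain N where N: "\<forall>z\<in>shift_space S C. (\<forall>i. \<bar>i\<bar> \<le> int N \<longrightarrow> z i = x i) \<longrightarrow> (z, \<Gamma> #>\<^bsub>Zd\<^esub> a) \<in> U"
    using skew_open_cylinder[of S C _ U] UV x(2) by blast
  obtain N' where N': "\<forall>z\<in>shift_space S C. (\<forall>i. \<bar>i\<bar> \<le> int N' \<longrightarrow> z i = y i) \<longrightarrow> (z, \<Gamma> #>\<^bsub>Zd\<^esub> b) \<in> V"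
    using skew_open_cylinder[of S C _ V] UV y(2) by blast
  define t where "t = b - a - hsum Zd hh x N - hsum Zd hh (\<lambda>j. y (j - int N')) N'"
  obtain L w where Lw: "walk S C hh (x (int N)) (y (- int N')) L w" "w - t \<in> \<Gamma>"
    using walk_in_every_class[OF tr gen fi occurs_shift_space[OF x(1)] occurs_shift_space[OF y(1)]]
    by blast
  define n where "n = N + (L + N')"
  obtain z where z: "z \<in> shift_space S C" "\<forall>i\<le>int N. z i = x i" "\<forall>i\<ge>- int N'. (shift ^^ n) z i = y i"
    "hsum Zd hh z n = hsum Zd hh x N + (w + hsum Zd hh (\<lambda>j. y (j - int N')) N')"
    using splice_orbit[OF x(1) y(1) Lw(1)] unfolding n_def by blast
  have zU: "(z, \<Gamma> #>\<^bsub>Zd\<^esub> a) \<in> U" using N z(1,2) by auto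
  have "a + hsum Zd hh z n - b = w - t" unfolding z(4) t_def by (simp add: algebra_simps)
  then have "\<Gamma> #>\<^bsub>Zd\<^esub> (a + hsum Zd hh z n) = \<Gamma> #>\<^bsub>Zd\<^esub> b" using coset_eq_iff[OF sg] Lw(2) by simp
  then have orbit: "(skew (Zd Mod \<Gamma>) (quot_cocycle \<Gamma> hh) ^^ n) (z, \<Gamma> #>\<^bsub>Zd\<^esub> a)
      = ((shift ^^ n) z, \<Gamma> #>\<^bsub>Zd\<^esub> b)" by (simp add: skew_pow_quot[OF sg])
  have "(shift ^^ n) z \<in> shift_space S C" unfolding shift_pow by (rule shift_space_translate[OF z(1)])
  moreover have "\<forall>i. \<bar>i\<bar> \<le> int N' \<longrightarrow> (shift ^^ n) z i = y i" using z(3) by auto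
  ultimately have "((shift ^^ n) z, \<Gamma> #>\<^bsub>Zd\<^esub> b) \<in> V" using N' by blast
  then have "(skew (Zd Mod \<Gamma>) (quot_cocycle \<Gamma> hh) ^^ n) (z, \<Gamma> #>\<^bsub>Zd\<^esub> a) \<in> V" unfolding orbit .
  then have "(skew (Zd Mod \<Gamma>) (quot_cocycle \<Gamma> hh) ^^ n) (z, \<Gamma> #>\<^bsub>Zd\<^esub> a)
      \<in> (skew (Zd Mod \<Gamma>) (quot_cocycle \<Gamma> hh) ^^ n) ` U \<inter> V" by (intro IntI imageI zU)
  then show "\<exists>n. (skew (Zd Mod \<Gamma>) (quot_cocycle \<Gamma> hh) ^^ n) ` U \<inter> V \<noteq> {}" by blast
qed

section \<open>(a) implies (b)\<close>

lemma closed_walk_weight: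
  assumes p: "walk S C hh c c L w"
  shows "w = 0 \<or> w \<in> displacement S C Zd hh"
proof (cases "L = 0")
  case True
  then show ?thesis using p unfolding walk_def by auto
next
  case False
  then show ?thesis using closed_walk_displacement[OF p] by simp
qed

text \<open>If all closed walks have weight in \<open>\<Gamma>\<close>, walks with common endpoints have equal weights
  modulo \<open>\<Gamma>\<close>: close both up by the same return walk.\<close>
lemma walk_weight_unique_mod:
  assumes tr: "shift_transitive S C" and sg: "subgroup \<Gamma> Zd"
    and loops: "\<forall>c L w. walk S C hh c c L w \<longrightarrow> w \<in> \<Gamma>"
    and p: "walk S C hh a c L w" and p': "walk S C hh a c L' w'"
  shows "w - w' \<in> \<Gamma>"
proof -
  obtain L3 w3 where p3: "walk S C hh c a L3 w3" using transitive_walk[OF tr] walk_occurs[OF p] by blast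
  have "(w + w3) - (w' + w3) \<in> \<Gamma>"
    using subgroup_Zd_diff[OF sg loops[rule_format, OF walk_concat[OF p p3]]
        loops[rule_format, OF walk_concat[OF p' p3]]] .
  then show ?thesis by simp
qed

text \<open>If all closed walks have weight in \<open>\<Gamma>\<close>, the cocycle is a coboundary modulo \<open>\<Gamma>\<close>:
  \<open>h(x, n) \<equiv> \<phi>(x\<^sub>n) - \<phi>(x\<^sub>0)\<close>, where \<open>\<phi>(c)\<close> is the weight of some walk from a base state to \<open>c\<close>.\<close>
lemma transfer_function:
  assumes tr: "shift_transitive S C" and ne: "shift_space S C \<noteq> {}" and sg: "subgroup \<Gamma> Zd"
    and loops: "\<forall>c L w. walk S C hh c c L w \<longrightarrow> w \<in> \<Gamma>"
  obtains \<phi> where "\<And>x n. x \<in> shift_space S C \<Longrightarrow> hsum Zd hh x n + \<phi> (x 0) - \<phi> (x (int n)) \<in> \<Gamma>"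
proof -
  obtain x0 where x0: "x0 \<in> shift_space S C" using ne by blast
  define \<phi> where "\<phi> = (\<lambda>c. SOME w. \<exists>L. walk S C hh (x0 0) c L w)"
  have phi: "\<exists>L. walk S C hh (x0 0) c L (\<phi> c)" if "occurs S C c" for c
  proof -
    have "\<exists>w L. walk S C hh (x0 0) c L w"
      using transitive_walk[OF tr occurs_shift_space[OF x0] that] by blast
    then show ?thesis unfolding \<phi>_def by (rule someI_ex)
  qed
  have edge: "\<phi> (x i) + hh (x i) (x (i + 1)) - \<phi> (x (i + 1)) \<in> \<Gamma>"
    if x: "x \<in> shift_space S C" for x i
  proof -
    obtain L where p: "walk S C hh (x0 0) (x i) L (\<phi> (x i))" using phi occurs_shift_space[OF x] by blast
    have "walk S C hh (x0 0) (x (i + 1)) (L + 1) (\<phi> (x i) + hh (x i) (x (i + 1)))"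
      using walk_concat[OF p walk_step[OF x, of hh i]] .
    moreover obtain L' where "walk S C hh (x0 0) (x (i + 1)) L' (\<phi> (x (i + 1)))"
      using phi occurs_shift_space[OF x] by blast
    ultimately show ?thesis by (rule walk_weight_unique_mod[OF tr sg loops])
  qed
  have "hsum Zd hh x n + \<phi> (x 0) - \<phi> (x (int n)) \<in> \<Gamma>" if x: "x \<in> shift_space S C" for x n
  proof (induction n)
    case 0
    then show ?case using subgroup_Zd_zero[OF sg] by simp
  next
    case (Suc n)
    have split: "hsum Zd hh x (Suc n) + \<phi> (x 0) - \<phi> (x (int (Suc n)))
       = (hsum Zd hh x n + \<phi> (x 0) - \<phi> (x (int n)))
         + (\<phi> (x (int n)) + hh (x (int n)) (x (int n + 1)) - \<phi> (x (int n + 1)))"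
      by (simp add: algebra_simps)
    show ?case unfolding split by (rule subgroup_Zd_add[OF sg Suc edge[OF x, of "int n"]])
  qed
  then show thesis using that by blast
qed

lemma graph_skew_open: "skew_open S C (Zd Mod \<Gamma>) {(x, \<Gamma> #>\<^bsub>Zd\<^esub> F (x 0)) | x. x \<in> shift_space S C}"
  unfolding skew_open_def sigma_open_def quotient_carrier by (auto intro!: exI[of _ 0])

text \<open>(a) \<Rightarrow> (b): if the displacements lie in a proper finite-index \<open>\<Gamma>\<close>, then \<open>\<tau>\<^sub>\<Gamma>\<close> maps the
  graph of the transfer function \<open>\<phi>\<close> into itself, so it never meets the graph of \<open>\<phi> + v\<close>
  for \<open>v \<notin> \<Gamma>\<close>; both graphs are nonempty open sets.\<close>
lemma generating_of_ftp:
  assumes tr: "shift_transitive S C" and ne: "shift_space S C \<noteq> {}" and f: "ftp S C hh"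
  shows "generate Zd (displacement S C Zd hh) = UNIV"
proof (rule ccontr)
  assume "generate Zd (displacement S C Zd hh) \<noteq> UNIV"
  then obtain \<Gamma> v where fi: "finite_index \<Gamma>" and D: "displacement S C Zd hh \<subseteq> \<Gamma>" and v: "v \<notin> \<Gamma>"
    by (rule non_generating_in_proper_finite_index)
  have sg: "subgroup \<Gamma> Zd" using fi by (simp add: finite_index_def)
  have "w \<in> \<Gamma>" if "walk S C hh c c L w" for c L w
    using closed_walk_weight[OF that] D subgroup_Zd_zero[OF sg] by auto
  then have loops: "\<forall>c L w. walk S C hh c c L w \<longrightarrow> w \<in> \<Gamma>" by blast
  obtain \<phi> where \<phi>: "\<And>x n. x \<in> shift_space S C \<Longrightarrow> hsum Zd hh x n + \<phi> (x 0) - \<phi> (x (int n)) \<in> \<Gamma>"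
    using transfer_function[OF tr ne sg loops] by blast
  define U where "U = {(x, \<Gamma> #>\<^bsub>Zd\<^esub> \<phi> (x 0)) | x. x \<in> shift_space S C}"
  define V where "V = {(x, \<Gamma> #>\<^bsub>Zd\<^esub> (\<phi> (x 0) + v)) | x. x \<in> shift_space S C}"
  have "skew_open S C (Zd Mod \<Gamma>) U" "skew_open S C (Zd Mod \<Gamma>) V"
    unfolding U_def V_def using graph_skew_open[of S C \<Gamma> "\<lambda>c. \<phi> c + v"] graph_skew_open by blast+
  moreover have "U \<noteq> {}" "V \<noteq> {}" unfolding U_def V_def using ne by blast+
  moreover have "skew_transitive S C (Zd Mod \<Gamma>) (quot_cocycle \<Gamma> hh)" using f fi unfolding ftp_def by blast
  ultimately obtain n x where x: "x \<in> shift_space S C"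
    and "(skew (Zd Mod \<Gamma>) (quot_cocycle \<Gamma> hh) ^^ n) (x, \<Gamma> #>\<^bsub>Zd\<^esub> \<phi> (x 0)) \<in> V"
    unfolding skew_transitive_def U_def by blast
  then have "\<Gamma> #>\<^bsub>Zd\<^esub> (\<phi> (x 0) + hsum Zd hh x n) = \<Gamma> #>\<^bsub>Zd\<^esub> (\<phi> (x (int n)) + v)"
    unfolding V_def by (auto simp: skew_pow_quot[OF sg] shift_pow)
  then have "(\<phi> (x 0) + hsum Zd hh x n) - (\<phi> (x (int n)) + v) \<in> \<Gamma>" using coset_eq_iff[OF sg] by blast
  from subgroup_Zd_diff[OF sg \<phi>[OF x, of n] this] have "v \<in> \<Gamma>" by (simp add: algebra_simps)
  then show False using v by blast
qed

section \<open>(b) is equivalent to (c)\<close>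

lemma semigen_subset_generate: "semigen G D \<subseteq> generate G D"
  unfolding semigen_def by (blast intro: generate.incl generate.eng)

text \<open>(b) \<Rightarrow> (c): a subsemigroup \<open>T\<close> of \<open>\<int>\<^sup>d/\<Gamma>\<close> containing the displacements pulls back to a
  saturated subsemigroup of \<open>\<int>\<^sup>d\<close> containing the displacements, which is then everything.\<close>
lemma quotient_generation_of_generating:
  assumes gen: "generate Zd (displacement S C Zd hh) = UNIV" and fi: "finite_index \<Gamma>"
  shows "semigen (Zd Mod \<Gamma>) (displacement S C (Zd Mod \<Gamma>) (quot_cocycle \<Gamma> hh))
           = generate (Zd Mod \<Gamma>) (displacement S C (Zd Mod \<Gamma>) (quot_cocycle \<Gamma> hh))
       \<and> generate (Zd Mod \<Gamma>) (displacement S C (Zd Mod \<Gamma>) (quot_cocycle \<Gamma> hh)) = carrier (Zd Mod \<Gamma>)"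
proof -
  have sg: "subgroup \<Gamma> Zd" using fi by (simp add: finite_index_def)
  define D where "D = displacement S C Zd hh"
  define D' where "D' = displacement S C (Zd Mod \<Gamma>) (quot_cocycle \<Gamma> hh)"
  have D': "D' = (\<lambda>v. \<Gamma> #>\<^bsub>Zd\<^esub> v) ` D" unfolding D'_def D_def by (rule displacement_quot[OF sg])
  have "D \<noteq> {}"
  proof
    assume "D = {}"
    have "vec 1 \<in> generate Zd D" using gen unfolding D_def by simp
    also have "generate Zd D = {0}" using \<open>D = {}\<close> group.generate_empty[OF Zd_group] by simp
    finally show False by (simp add: vec_eq_iff)
  qed
  have "Y \<in> T" if Y: "Y \<in> carrier (Zd Mod \<Gamma>)" and T: "D' \<subseteq> T" "\<forall>a\<in>T. \<forall>b\<in>T. a \<otimes>\<^bsub>Zd Mod \<Gamma>\<^esub> b \<in> T"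
    for Y T
  proof -
    define M where "M = {a. \<Gamma> #>\<^bsub>Zd\<^esub> a \<in> T}"
    have DM: "D \<subseteq> M" using T(1) unfolding M_def D' by blast
    have "subgroup M Zd"
    proof (rule saturated_subsemigroup_is_subgroup[OF fi])
      show "M \<noteq> {}" using DM \<open>D \<noteq> {}\<close> by blast
      show "a + b \<in> M" if "a \<in> M" "b \<in> M" for a b
        using T(2) that sg unfolding M_def by force
      show "a + g \<in> M" if "a \<in> M" "g \<in> \<Gamma>" for a g
        using that coset_eq_iff[OF sg, of "a + g" a] unfolding M_def by simp
    qed
    then have M: "u \<in> M" for u using group.generate_subgroup_incl[OF Zd_group DM] gen by (auto simp: D_def)
    obtain a where "Y = \<Gamma> #>\<^bsub>Zd\<^esub> a" using Y unfolding quotient_carrier by blast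
    then show "Y \<in> T" using M[of a] unfolding M_def by simp
  qed
  then have "carrier (Zd Mod \<Gamma>) \<subseteq> semigen (Zd Mod \<Gamma>) D'" unfolding semigen_def by blast
  moreover have "generate (Zd Mod \<Gamma>) D' \<subseteq> carrier (Zd Mod \<Gamma>)"
    by (rule group.generate_incl[OF quotient_group[OF sg]]) (auto simp: D' quotient_carrier)
  ultimately show ?thesis using semigen_subset_generate[of "Zd Mod \<Gamma>" D'] unfolding D'_def[symmetric]
    by blast
qed

text \<open>(c) \<Rightarrow> (b): if the displacements lie in a proper finite-index \<open>\<Gamma>\<close>, their images in
  \<open>\<int>\<^sup>d/\<Gamma>\<close> are trivial and generate only the trivial subgroup.\<close>
lemma generating_of_quotient_generation:
  assumes c: "\<forall>\<Gamma>. finite_index \<Gamma> \<longrightarrow>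
      generate (Zd Mod \<Gamma>) (displacement S C (Zd Mod \<Gamma>) (quot_cocycle \<Gamma> hh)) = carrier (Zd Mod \<Gamma>)"
  shows "generate Zd (displacement S C Zd hh) = UNIV"
proof (rule ccontr)
  assume "generate Zd (displacement S C Zd hh) \<noteq> UNIV"
  then obtain \<Gamma> v where fi: "finite_index \<Gamma>" and D: "displacement S C Zd hh \<subseteq> \<Gamma>" and v: "v \<notin> \<Gamma>"
    by (rule non_generating_in_proper_finite_index)
  have sg: "subgroup \<Gamma> Zd" using fi by (simp add: finite_index_def)
  have "displacement S C (Zd Mod \<Gamma>) (quot_cocycle \<Gamma> hh) \<subseteq> {\<one>\<^bsub>Zd Mod \<Gamma>\<^esub>}"
  proof
    fix Y assume "Y \<in> displacement S C (Zd Mod \<Gamma>) (quot_cocycle \<Gamma> hh)"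
    then obtain u where "u \<in> displacement S C Zd hh" "Y = \<Gamma> #>\<^bsub>Zd\<^esub> u"
      by (auto simp: displacement_quot[OF sg])
    then show "Y \<in> {\<one>\<^bsub>Zd Mod \<Gamma>\<^esub>}" by (simp add: coset_eq_subgroup_iff[OF sg] subsetD[OF D])
  qed
  then have "generate (Zd Mod \<Gamma>) (displacement S C (Zd Mod \<Gamma>) (quot_cocycle \<Gamma> hh)) \<subseteq> {\<Gamma>}"
    using group.mono_generate[OF quotient_group[OF sg]] group.generate_one[OF quotient_group[OF sg]]
    by (metis one_FactGroup)
  moreover have "generate (Zd Mod \<Gamma>) (displacement S C (Zd Mod \<Gamma>) (quot_cocycle \<Gamma> hh)) = carrier (Zd Mod \<Gamma>)"
    using c fi by blast
  moreover have "\<Gamma> #>\<^bsub>Zd\<^esub> v \<in> carrier (Zd Mod \<Gamma>)" by (simp add: quotient_carrier)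
  ultimately have "\<Gamma> #>\<^bsub>Zd\<^esub> v = \<Gamma>" by blast
  then show False using v coset_eq_subgroup_iff[OF sg] by blast
qed

theorem mainTheorem5:
  fixes S :: "'s set" and C :: "'s \<Rightarrow> 's \<Rightarrow> bool" and hh :: "'s \<Rightarrow> 's \<Rightarrow> int ^ 'd"
  assumes "countable S"
    and "finite_rows_cols S C"
    and "shift_space S C \<noteq> {}"
    and "shift_transitive S C"
  shows "(ftp S C hh \<longleftrightarrow> generate Zd (displacement S C Zd hh) = UNIV)
       \<and> (generate Zd (displacement S C Zd hh) = UNIV \<longleftrightarrow>
          (\<forall>\<Gamma>. finite_index \<Gamma> \<longrightarrow>
             semigen (Zd Mod \<Gamma>) (displacement S C (Zd Mod \<Gamma>) (quot_cocycle \<Gamma> hh))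
               = generate (Zd Mod \<Gamma>) (displacement S C (Zd Mod \<Gamma>) (quot_cocycle \<Gamma> hh))
           \<and> generate (Zd Mod \<Gamma>) (displacement S C (Zd Mod \<Gamma>) (quot_cocycle \<Gamma> hh))
               = carrier (Zd Mod \<Gamma>)))"
proof -
  let ?gen = "generate Zd (displacement S C Zd hh) = UNIV"
  have a_iff_b: "ftp S C hh \<longleftrightarrow> ?gen"
  proof
    assume "ftp S C hh"
    then show ?gen by (rule generating_of_ftp[OF assms(4,3)])
  next
    assume gen: ?gen
    show "ftp S C hh" unfolding ftp_def by (intro allI impI skew_transitive_of_generating[OF assms(4) gen])
  qed
  have b_iff_c: "?gen \<longleftrightarrow> (\<forall>\<Gamma>. finite_index \<Gamma> \<longrightarrow>
      semigen (Zd Mod \<Gamma>) (displacement S C (Zd Mod \<Gamma>) (quot_cocycle \<Gamma> hh))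
        = generate (Zd Mod \<Gamma>) (displacement S C (Zd Mod \<Gamma>) (quot_cocycle \<Gamma> hh))
      \<and> generate (Zd Mod \<Gamma>) (displacement S C (Zd Mod \<Gamma>) (quot_cocycle \<Gamma> hh)) = carrier (Zd Mod \<Gamma>))"
    (is "_ \<longleftrightarrow> ?c")
  proof
    assume gen: ?gen
    show ?c by (intro allI impI quotient_generation_of_generating[OF gen])
  next
    assume c: ?c
    show ?gen by (rule generating_of_quotient_generation) (simp add: c)
  qed
  show ?thesis using a_iff_b b_iff_c by (rule conjI)
qed

end
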